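(* Let $\mathcal{M}_{\mathbb{P}}=(\mathcal{M},\mathbb{P})$ be an uncertain parametric MDP, let $\eta\in(0,1)$ be a desired lower bound and $\beta\in(0,1)$ a desired confidence probability, and set \[N=\Big\lceil \frac{\log(1-\beta)}{\log\eta}\Big\rceil .\] If $\mathcal{U}_N$ is a set of $N$ parameter instantiations sampled independently from $\mathbb{P}$ and the threshold $\lambda^*(\mathcal{U}_N)$ of the specification $\varphi$ is chosen, for any sample set, such that $\mathcal{M}[u]\models\varphi$ for all $u\in\mathcal{U}_N$, then $\mathbb{P}^N\{F(\mathcal{M}_{\mathbb{P}},\varphi)\ge\eta\}\ge\beta$; moreover, this $N$ is the smallest sample size for which the lower bound $(1-\beta)^{1/N}$ of the guarantee $\mathbb{P}^N\{F(\mathcal{M}_{\mathbb{P}},\varphi)\ge(1-\beta)^{1/N}\}\ge\beta$ is at least $\eta$.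
   Context: A parametric MDP (pMDP) is $\mathcal{M}=(S,\mathit{Act},s_I,V,\mathcal{P})$ with finite states, finite actions, initial state, finite parameter set $V$ and transition function $\mathcal{P}:S\times\mathit{Act}\times S\to\mathbb{Q}[V]$. Instantiations $u:V\to\mathbb{R}$ form the parameter space $\mathcal{V}_{\mathcal{M}}$; $\mathcal{M}[u]$ is the instantiated MDP, assumed well-defined and graph-preserving. An uncertain pMDP is $\mathcal{M}_{\mathbb{P}}=(\mathcal{M},\mathbb{P})$ with $\mathbb{P}$ a probability distribution on $\mathcal{V}_{\mathcal{M}}$. A specification $\varphi$ consists of a measure on MDPs (e.g. max/min reachability probability or expected reward), a comparison operator in $\{<,\le,\ge,>\}$ and a threshold; $\mathcal{M}[u]\models\varphi$ means the measure's value on $\mathcal{M}[u]$ satisfies the comparison. The satisfaction probability is $F(\mathcal{M}_{\mathbb{P}},\varphi)=\int I_\varphi(u)\,d\mathbb{P}(u)$ with $I_\varphi(u)=1$ iff $\mathcal{M}[u]\models\varphi$. $\mathbb{P}^N$ is the product measure of the i.i.d. sample set; $\lceil x\rceil$ rounds up to the nearest integer. *)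

theory Defs
  imports "HOL-Probability.Probability"
begin

record ('s, 'a) mdp =
  m_states :: "'s set"
  m_acts   :: "'a set"
  m_init   :: 's
  m_trans  :: "'s \<Rightarrow> 'a \<Rightarrow> 's \<Rightarrow> real"

type_synonym 'v inst = "'v \<Rightarrow> real"

text \<open>A polynomial over the finite variable set V with rational coefficients,
  represented as the (polynomial) function on instantiations it induces:
  a finite sum of rational multiples of monomials over V.\<close>
definition is_rat_poly :: "'v set \<Rightarrow> ('v inst \<Rightarrow> real) \<Rightarrow> bool" where
  "is_rat_poly V p \<longleftrightarrow>
     (\<exists>ms :: ('v \<Rightarrow> nat) set. \<exists>c :: ('v \<Rightarrow> nat) \<Rightarrow> real.
        finite ms \<and> (\<forall>m\<in>ms. \<forall>x. x \<notin> V \<longrightarrow> m x = 0) \<and> (\<forall>m\<in>ms. c m \<in> \<rat>) \<and>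
        p = (\<lambda>u. \<Sum>m\<in>ms. c m * (\<Prod>x\<in>V. u x ^ m x)))"

record ('s, 'a, 'v) pmdp =
  p_states :: "'s set"
  p_acts   :: "'a set"
  p_init   :: 's
  p_params :: "'v set"
  p_trans  :: "'s \<Rightarrow> 'a \<Rightarrow> 's \<Rightarrow> ('v inst \<Rightarrow> real)"

definition pmdp :: "('s, 'a, 'v) pmdp \<Rightarrow> bool" where
  "pmdp M \<longleftrightarrow> finite (p_states M) \<and> finite (p_acts M) \<and> p_init M \<in> p_states M \<and>
     finite (p_params M) \<and>
     (\<forall>s\<in>p_states M. \<forall>a\<in>p_acts M. \<forall>s'\<in>p_states M. is_rat_poly (p_params M) (p_trans M s a s'))"

definition inst :: "('s, 'a, 'v) pmdp \<Rightarrow> 'v inst \<Rightarrow> ('s, 'a) mdp" where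
  "inst M u = \<lparr> m_states = p_states M, m_acts = p_acts M, m_init = p_init M,
                m_trans = (\<lambda>s a s'. p_trans M s a s' u) \<rparr>"

definition enabled :: "('s, 'a, 'v) pmdp \<Rightarrow> 's \<Rightarrow> 'a set" where
  "enabled M s = {a \<in> p_acts M. \<exists>s'\<in>p_states M. p_trans M s a s' \<noteq> (\<lambda>_. 0)}"

definition well_defined :: "('s, 'a, 'v) pmdp \<Rightarrow> 'v inst \<Rightarrow> bool" where
  "well_defined M u \<longleftrightarrow>
     (\<forall>s\<in>p_states M. \<forall>a\<in>enabled M s.
        (\<forall>s'\<in>p_states M. 0 \<le> p_trans M s a s' u \<and> p_trans M s a s' u \<le> 1) \<and>
        (\<Sum>s'\<in>p_states M. p_trans M s a s' u) = 1)"

definition graph_preserving :: "('s, 'a, 'v) pmdp \<Rightarrow> 'v inst \<Rightarrow> bool" where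
  "graph_preserving M u \<longleftrightarrow>
     (\<forall>s\<in>p_states M. \<forall>a\<in>p_acts M. \<forall>s'\<in>p_states M.
        p_trans M s a s' \<noteq> (\<lambda>_. 0) \<longrightarrow> p_trans M s a s' u \<noteq> 0)"

datatype cmp_op = Lt | Le | Ge | Gt

fun cmp :: "cmp_op \<Rightarrow> ereal \<Rightarrow> ereal \<Rightarrow> bool" where
  "cmp Lt x t \<longleftrightarrow> x < t"
| "cmp Le x t \<longleftrightarrow> x \<le> t"
| "cmp Ge x t \<longleftrightarrow> x \<ge> t"
| "cmp Gt x t \<longleftrightarrow> x > t"

text \<open>A specification: a measure on MDPs (e.g. max/min reachability probability,
  expected reward; values in the extended reals), a comparison operator, a threshold.\<close>
record ('s, 'a) spec =
  s_meas :: "('s, 'a) mdp \<Rightarrow> ereal"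
  s_op   :: cmp_op
  s_thr  :: ereal

definition sats :: "('s, 'a) mdp \<Rightarrow> ('s, 'a) spec \<Rightarrow> bool" where
  "sats D \<phi> \<longleftrightarrow> cmp (s_op \<phi>) (s_meas \<phi> D) (s_thr \<phi>)"

definition sat_prob :: "('s, 'a, 'v) pmdp \<Rightarrow> 'v inst measure \<Rightarrow> ('s, 'a) spec \<Rightarrow> real" where
  "sat_prob M P \<phi> = (\<integral>u. (if sats (inst M u) \<phi> then 1 else 0) \<partial>P)"

end

theory Submission
  imports Defs
begin

text \<open>The satisfaction probability is monotone in the threshold (after negating the threshold
  for \<open>\<ge>\<close> and \<open>>\<close>). Call a threshold bad if its satisfaction probability is below \<open>\<eta>\<close>. If the chosen
  threshold is bad, every sample satisfies the specification at some bad threshold, i.e. lies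
  in the union \<open>A\<close> of the satisfaction events of all bad thresholds. This is an increasing
  union of events of probability below \<open>\<eta>\<close>, so \<open>P(A) \<le> \<eta>\<close>, and all \<open>N\<close> independent
  samples lie in \<open>A\<close> with probability at most \<open>\<eta>\<^sup>N \<le> 1 - \<beta>\<close>. The bound is
  distribution-free: neither the structure of the pMDP nor the measure on MDPs matters beyond
  measurability. Finally, for \<open>n \<ge> 1\<close> we have \<open>\<eta> \<le> (1 - \<beta>) powr (1 / n)\<close> iff
  \<open>n \<ge> ln (1 - \<beta>) / ln \<eta>\<close>, so \<open>N\<close> is the least such \<open>n\<close>.\<close>

lemma downward_closed_in_borel:
  fixes D :: "'a::{complete_linorder, linorder_topology} set"
  assumes down: "\<And>x y. y \<in> D \<Longrightarrow> x \<le> y \<Longrightarrow> x \<in> D"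
  shows "D \<in> sets borel"
proof (cases "Sup D \<in> D")
  case True
  then have "D = {..Sup D}" using down by (auto intro: Sup_upper)
  then show ?thesis using atMost_borel[of "Sup D"] by simp
next
  case False
  have "D = {..<Sup D}"
  proof
    show "D \<subseteq> {..<Sup D}" using False by (auto simp: order_less_le intro: Sup_upper)
    show "{..<Sup D} \<subseteq> D" using down by (auto simp: less_Sup_iff)
  qed
  then show ?thesis using lessThan_borel[of "Sup D"] by simp
qed

lemma UN_mono_family_eq_UN_seq:
  fixes A :: "ereal \<Rightarrow> 'b set"
  assumes "T \<noteq> {}" and mono: "\<And>s t. s \<le> t \<Longrightarrow> A s \<subseteq> A t"
  obtains f :: "nat \<Rightarrow> ereal"
    where "incseq f" "range f \<subseteq> T" "(\<Union>t\<in>T. A t) = (\<Union>i. A (f i))"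
proof (cases "Sup T \<in> T")
  case True
  have "A t \<subseteq> A (Sup T)" if "t \<in> T" for t using mono Sup_upper that by blast
  then have "(\<Union>t\<in>T. A t) = A (Sup T)" using True by blast
  with True show ?thesis by (intro that[of "\<lambda>_. Sup T"]) (auto simp: incseq_def)
next
  case False
  obtain f :: "nat \<Rightarrow> ereal" where f: "incseq f" "range f \<subseteq> T" "Sup T = (SUP i. f i)"
    using Sup_countable_SUP[OF \<open>T \<noteq> {}\<close>] by blast
  have "\<exists>i. t < f i" if "t \<in> T" for t
  proof -
    have "t < Sup T" using that False by (metis Sup_upper order_less_le)
    then show ?thesis by (simp add: f(3) less_SUP_iff)
  qed
  then have "(\<Union>t\<in>T. A t) \<subseteq> (\<Union>i. A (f i))" using mono by (fastforce dest: less_imp_le)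
  moreover have "(\<Union>i. A (f i)) \<subseteq> (\<Union>t\<in>T. A t)" using f(2) by blast
  ultimately show ?thesis using f by (intro that) auto
qed

lemma measure_UN_mono_family_le:
  fixes A :: "ereal \<Rightarrow> 'b set"
  assumes "finite_measure M"
    and sets: "\<And>t. A t \<in> sets M"
    and mono: "\<And>s t. s \<le> t \<Longrightarrow> A s \<subseteq> A t"
    and bound: "\<And>t. t \<in> T \<Longrightarrow> measure M (A t) \<le> \<eta>"
    and "0 \<le> \<eta>"
  shows "(\<Union>t\<in>T. A t) \<in> sets M" and "measure M (\<Union>t\<in>T. A t) \<le> \<eta>"
proof -
  interpret finite_measure M by fact
  have "(\<Union>t\<in>T. A t) \<in> sets M \<and> measure M (\<Union>t\<in>T. A t) \<le> \<eta>"
  proof (cases "T = {}")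
    case True
    then show ?thesis using \<open>0 \<le> \<eta>\<close> by simp
  next
    case False
    then obtain f where f: "incseq f" "range f \<subseteq> T" "(\<Union>t\<in>T. A t) = (\<Union>i. A (f i))"
      using UN_mono_family_eq_UN_seq mono by metis
    have "incseq (\<lambda>i. A (f i))" using f(1) mono by (simp add: incseq_def)
    then have "(\<lambda>i. measure M (A (f i))) \<longlonglongrightarrow> measure M (\<Union>i. A (f i))"
      using sets by (intro finite_Lim_measure_incseq) auto
    then have "measure M (\<Union>i. A (f i)) \<le> \<eta>"
      using f(2) bound by (intro LIMSEQ_le_const2) auto
    then show ?thesis using f(3) sets by auto
  qed
  then show "(\<Union>t\<in>T. A t) \<in> sets M" "measure M (\<Union>t\<in>T. A t) \<le> \<eta>" by auto
qed

lemma measure_PiM_iid_Collect: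
  assumes "prob_space P" "finite I" "A \<in> sets P"
  shows "measure (PiM I (\<lambda>_. P)) {x\<in>space (PiM I (\<lambda>_. P)). \<forall>i\<in>I. x i \<in> A}
           = measure P A ^ card I"
proof -
  interpret P: prob_space P by fact
  interpret PP: product_prob_space "\<lambda>_. P" I by (intro product_prob_spaceI) fact
  have "emeasure (PiM I (\<lambda>_. P)) {x\<in>space (PiM I (\<lambda>_. P)). \<forall>i\<in>I. x i \<in> A}
          = emeasure P A ^ card I"
    using assms by (simp add: PP.emeasure_PiM_Collect)
  then show ?thesis
    by (simp add: PP.emeasure_eq_measure P.emeasure_eq_measure ennreal_power)
qed

lemma scenario_bound:
  fixes P :: "'b measure" and N :: nat
    and sat :: "'b \<Rightarrow> ereal \<Rightarrow> bool" and lam :: "(nat \<Rightarrow> 'b) \<Rightarrow> ereal"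
  defines "Q \<equiv> PiM {..<N} (\<lambda>_. P)"
  assumes "prob_space P"
    and sat_mono: "\<And>u s t. sat u s \<Longrightarrow> s \<le> t \<Longrightarrow> sat u t"
    and sat_sets: "\<And>t. {u\<in>space P. sat u t} \<in> sets P"
    and lam: "lam \<in> borel_measurable Q"
    and samples: "\<forall>us\<in>space Q. \<forall>i<N. sat (us i) (lam us)"
    and "0 \<le> \<eta>"
  shows "measure Q {us\<in>space Q. \<eta> \<le> measure P {u\<in>space P. sat u (lam us)}} \<ge> 1 - \<eta> ^ N"
proof -
  interpret P: prob_space P by fact
  interpret Q: prob_space Q unfolding Q_def by (simp add: prob_space_PiM P.prob_space_axioms)
  define F where "F t = P.prob {u\<in>space P. sat u t}" for t
  have F_mono: "F s \<le> F t" if "s \<le> t" for s t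
    unfolding F_def using that sat_mono sat_sets by (intro P.finite_measure_mono) auto
  define bad where "bad = {t. F t < \<eta>}"
  have bad_event: "{us\<in>space Q. lam us \<in> bad} \<in> sets Q"
  proof -
    have "bad \<in> sets borel"
      using F_mono by (intro downward_closed_in_borel) (fastforce simp: bad_def)
    from measurable_sets[OF lam this] show ?thesis by (simp add: vimage_def Int_def conj_commute)
  qed
  have level_mono: "{u\<in>space P. sat u s} \<subseteq> {u\<in>space P. sat u t}" if "s \<le> t" for s t
    using sat_mono that by blast
  have level_bound: "P.prob {u\<in>space P. sat u t} \<le> \<eta>" if "t \<in> bad" for t
    using that by (simp add: bad_def F_def)
  define A where "A = (\<Union>t\<in>bad. {u\<in>space P. sat u t})"
  have A: "A \<in> sets P" "P.prob A \<le> \<eta>"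
    unfolding A_def using measure_UN_mono_family_le[OF P.finite_measure_axioms sat_sets
      level_mono level_bound \<open>0 \<le> \<eta>\<close>] by auto
  have "us i \<in> A" if us: "us \<in> space Q" "lam us \<in> bad" and "i < N" for us i
  proof -
    have "us i \<in> space P" "sat (us i) (lam us)"
      using us \<open>i < N\<close> samples by (auto simp: Q_def space_PiM)
    with us(2) show "us i \<in> A" unfolding A_def by blast
  qed
  then have "{us\<in>space Q. lam us \<in> bad} \<subseteq> {us\<in>space Q. \<forall>i\<in>{..<N}. us i \<in> A}"
    by auto
  moreover have "{us\<in>space Q. \<forall>i\<in>{..<N}. us i \<in> A} \<in> sets Q"
    using A(1) unfolding Q_def by measurable
  ultimately have "Q.prob {us\<in>space Q. lam us \<in> bad}
                     \<le> Q.prob {us\<in>space Q. \<forall>i\<in>{..<N}. us i \<in> A}"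
    by (rule Q.finite_measure_mono)
  also have "\<dots> = P.prob A ^ N"
    using measure_PiM_iid_Collect[OF \<open>prob_space P\<close> finite_lessThan A(1)] by (simp add: Q_def)
  also have "\<dots> \<le> \<eta> ^ N" using A(2) by (simp add: power_mono)
  finally have "Q.prob {us\<in>space Q. lam us \<in> bad} \<le> \<eta> ^ N" .
  moreover have "{us\<in>space Q. \<eta> \<le> P.prob {u\<in>space P. sat u (lam us)}}
                   = space Q - {us\<in>space Q. lam us \<in> bad}"
    by (auto simp: bad_def F_def)
  ultimately show ?thesis using Q.prob_compl[OF bad_event] by simp
qed

lemma scenario_bound_cmp:
  fixes P :: "'b measure" and N :: nat
    and X :: "'b \<Rightarrow> ereal" and lam :: "(nat \<Rightarrow> 'b) \<Rightarrow> ereal"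
  defines "Q \<equiv> PiM {..<N} (\<lambda>_. P)"
  assumes P: "prob_space P" and X: "X \<in> borel_measurable P"
    and lam: "lam \<in> borel_measurable Q"
    and samples: "\<forall>us\<in>space Q. \<forall>i<N. cmp c (X (us i)) (lam us)"
    and "0 \<le> \<eta>"
  shows "measure Q {us\<in>space Q. \<eta> \<le> measure P {u\<in>space P. cmp c (X u) (lam us)}} \<ge> 1 - \<eta> ^ N"
proof (cases "c \<in> {Lt, Le}")
  case True
  have "{u\<in>space P. cmp c (X u) t} \<in> sets P" for t using X True by auto
  moreover have "cmp c x t" if "cmp c x s" "s \<le> t" for x s t
    using True that by (auto intro: order_trans less_le_trans)
  ultimately show ?thesis
    using scenario_bound[OF P, where sat = "\<lambda>u t. cmp c (X u) t"] lam samples \<open>0 \<le> \<eta>\<close>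
    unfolding Q_def by blast
next
  case False
  have "{u\<in>space P. cmp c (X u) (- t)} \<in> sets P" for t using X False by (cases c) auto
  moreover have "cmp c x (- t)" if "cmp c x (- s)" "s \<le> t" for x s t
  proof -
    have "- t \<le> - s" using \<open>s \<le> t\<close> by simp
    then show ?thesis
      using False that(1) order_trans[OF \<open>- t \<le> - s\<close>] le_less_trans[OF \<open>- t \<le> - s\<close>]
      by (cases c) auto
  qed
  moreover have "(\<lambda>us. - lam us) \<in> borel_measurable Q" using lam by measurable
  ultimately show ?thesis
    using scenario_bound[OF P, where sat = "\<lambda>u t. cmp c (X u) (- t)" and lam = "\<lambda>us. - lam us"]
      samples \<open>0 \<le> \<eta>\<close>
    unfolding Q_def by simp
qed

lemma sat_prob_eq_measure:
  "sat_prob M P \<phi> = measure P {u\<in>space P. sats (inst M u) \<phi>}"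
proof -
  have "(\<lambda>u. if sats (inst M u) \<phi> then 1 else 0 :: real) = indicator {u. sats (inst M u) \<phi>}"
    by (auto simp: indicator_def)
  then show ?thesis by (simp add: sat_prob_def Int_def conj_commute)
qed

lemma le_powr_inverse_iff:
  fixes \<eta> \<gamma> n :: real
  assumes "0 < \<eta>" "\<eta> < 1" "0 < \<gamma>" "0 < n"
  shows "\<eta> \<le> \<gamma> powr (1 / n) \<longleftrightarrow> ln \<gamma> / ln \<eta> \<le> n"
proof -
  have "ln \<eta> < 0" using assms by simp
  have "\<eta> \<le> \<gamma> powr (1 / n) \<longleftrightarrow> ln \<eta> \<le> ln (\<gamma> powr (1 / n))"
    using assms by (intro ln_le_cancel_iff [symmetric]) auto
  also have "\<dots> \<longleftrightarrow> ln \<eta> \<le> ln \<gamma> / n" using assms by (simp add: ln_powr)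
  also have "\<dots> \<longleftrightarrow> n * ln \<eta> \<le> ln \<gamma>" using \<open>0 < n\<close> by (simp add: field_simps)
  also have "\<dots> \<longleftrightarrow> ln \<gamma> / ln \<eta> \<le> n" using \<open>ln \<eta> < 0\<close> by (simp add: field_simps)
  finally show ?thesis .
qed

lemma sample_size_ceiling:
  fixes \<eta> \<beta> :: real and N :: nat
  assumes \<eta>: "0 < \<eta>" "\<eta> < 1" and \<beta>: "0 < \<beta>" "\<beta> < 1"
    and N: "N = nat \<lceil>ln (1 - \<beta>) / ln \<eta>\<rceil>"
  shows "1 \<le> N" and "\<eta> \<le> (1 - \<beta>) powr (1 / real N)" and "\<eta> ^ N \<le> 1 - \<beta>"
    and "\<And>n::nat. 1 \<le> n \<Longrightarrow> n < N \<Longrightarrow> (1 - \<beta>) powr (1 / real n) < \<eta>"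
proof -
  define c where "c = ln (1 - \<beta>) / ln \<eta>"
  have "0 < c" using \<eta> \<beta> by (simp add: c_def divide_neg_neg)
  have N_le_iff: "N \<le> n \<longleftrightarrow> c \<le> real n" for n :: nat
    unfolding N c_def [symmetric] by linarith
  have c_le_iff: "c \<le> real n \<longleftrightarrow> \<eta> \<le> (1 - \<beta>) powr (1 / real n)" if "1 \<le> n" for n :: nat
    using le_powr_inverse_iff[of \<eta> "1 - \<beta>" "real n"] \<eta> \<beta> that by (simp add: c_def)
  show "1 \<le> N" using N_le_iff[of 0] \<open>0 < c\<close> by simp
  then show le: "\<eta> \<le> (1 - \<beta>) powr (1 / real N)" using N_le_iff c_le_iff by blast
  have "\<eta> ^ N \<le> ((1 - \<beta>) powr (1 / real N)) ^ N" using le \<eta> by (simp add: power_mono)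
  also have "\<dots> = 1 - \<beta>" using \<open>1 \<le> N\<close> \<beta> by (simp add: powr_realpow [symmetric] powr_powr)
  finally show "\<eta> ^ N \<le> 1 - \<beta>" .
  show "(1 - \<beta>) powr (1 / real n) < \<eta>" if "1 \<le> n" "n < N" for n :: nat
    using that N_le_iff[of n] c_le_iff[of n] by auto
qed

theorem corollary1:
  fixes M :: "('s, 'a, 'v) pmdp" and P :: "'v inst measure"
    and \<phi> :: "('s, 'a) spec" and \<eta> \<beta> :: real and N :: nat
    and lam :: "(nat \<Rightarrow> 'v inst) \<Rightarrow> ereal"
  assumes "pmdp M" and "prob_space P"
    and "\<forall>u\<in>space P. well_defined M u \<and> graph_preserving M u"
    and "(\<lambda>u. s_meas \<phi> (inst M u)) \<in> borel_measurable P"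
    and "0 < \<eta>" and "\<eta> < 1" and "0 < \<beta>" and "\<beta> < 1"
    and "N = nat \<lceil>ln (1 - \<beta>) / ln \<eta>\<rceil>"
    and "lam \<in> borel_measurable (PiM {..<N} (\<lambda>_. P))"
    and "\<forall>us\<in>space (PiM {..<N} (\<lambda>_. P)). \<forall>i<N.
           sats (inst M (us i)) (\<phi>\<lparr>s_thr := lam us\<rparr>)"
  shows "measure (PiM {..<N} (\<lambda>_. P))
           {us \<in> space (PiM {..<N} (\<lambda>_. P)). sat_prob M P (\<phi>\<lparr>s_thr := lam us\<rparr>) \<ge> \<eta>} \<ge> \<beta>
       \<and> 1 \<le> N \<and> (1 - \<beta>) powr (1 / real N) \<ge> \<eta>
       \<and> (\<forall>n::nat. 1 \<le> n \<and> n < N \<longrightarrow> (1 - \<beta>) powr (1 / real n) < \<eta>)"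
proof -
  note size = sample_size_ceiling[OF assms(5-9)]
  have "measure (PiM {..<N} (\<lambda>_. P))
          {us \<in> space (PiM {..<N} (\<lambda>_. P)). sat_prob M P (\<phi>\<lparr>s_thr := lam us\<rparr>) \<ge> \<eta>}
        \<ge> 1 - \<eta> ^ N"
    using scenario_bound_cmp[OF assms(2,4,10), of "s_op \<phi>" \<eta>] assms(5,11)
    by (simp add: sat_prob_eq_measure sats_def)
  with size show ?thesis by auto
qed

end
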